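(* Let $\mathcal{X}=(\mathbf{x}_n)_{n=1}^\infty$ be a spreading sequence in a quasi-Banach space $\mathbb{X}$. Then $\mathcal{X}$ is bounded.
   Context: For a sequence $(\mathbf{x}_n)$ in $\mathbb{X}$, $\mathcal{N}\subseteq\mathbb{N}$ and an injective $\psi\colon\mathcal{N}\to\mathbb{N}$, $\psi$ is a translation if the assignment $\mathbf{x}_n\mapsto\mathbf{x}_{\psi(n)}$, $n\in\mathcal{N}$, defines a linear map on $\operatorname{span}(\mathbf{x}_n\colon n\in\mathcal{N})$ extending to an isomorphism $T_\psi$ from the closed linear span of $\{\mathbf{x}_n\colon n\in\mathcal{N}\}$ onto the closed linear span of $\{\mathbf{x}_n\colon n\in\psi(\mathcal{N})\}$. The sequence is spreading if every increasing map $\psi\colon\mathbb{N}\to\mathbb{N}$ is a translation. *)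

theory Defs
  imports "HOL-Analysis.Analysis"
begin

definition quasi_norm :: "('a::real_vector \<Rightarrow> real) \<Rightarrow> bool" where
  "quasi_norm q \<longleftrightarrow>
     (\<forall>x. 0 \<le> q x) \<and> (\<forall>x. q x = 0 \<longleftrightarrow> x = 0) \<and>
     (\<forall>t x. q (t *\<^sub>R x) = \<bar>t\<bar> * q x) \<and>
     (\<exists>\<kappa>\<ge>1. \<forall>x y. q (x + y) \<le> \<kappa> * (q x + q y))"

definition quasi_banach :: "('a::real_vector \<Rightarrow> real) \<Rightarrow> bool" where
  "quasi_banach q \<longleftrightarrow> quasi_norm q \<and>
     (\<forall>s::nat \<Rightarrow> 'a. (\<forall>e>0. \<exists>N. \<forall>m\<ge>N. \<forall>n\<ge>N. q (s m - s n) < e) \<longrightarrow>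
        (\<exists>l. (\<lambda>n. q (s n - l)) \<longlonglongrightarrow> 0))"

definition qclosure :: "('a::real_vector \<Rightarrow> real) \<Rightarrow> 'a set \<Rightarrow> 'a set" where
  "qclosure q S = {y. \<exists>s. (\<forall>n. s n \<in> S) \<and> (\<lambda>n. q (s n - y)) \<longlonglongrightarrow> 0}"

definition linear_on :: "'a::real_vector set \<Rightarrow> ('a \<Rightarrow> 'b::real_vector) \<Rightarrow> bool" where
  "linear_on A f \<longleftrightarrow> (\<forall>x\<in>A. \<forall>y\<in>A. f (x + y) = f x + f y) \<and>
                     (\<forall>c. \<forall>x\<in>A. f (c *\<^sub>R x) = c *\<^sub>R f x)"

definition closed_span :: "('a::real_vector \<Rightarrow> real) \<Rightarrow> (nat \<Rightarrow> 'a) \<Rightarrow> nat set \<Rightarrow> 'a set" where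
  "closed_span q x N = qclosure q (span (x ` N))"

definition translation :: "('a::real_vector \<Rightarrow> real) \<Rightarrow> (nat \<Rightarrow> 'a) \<Rightarrow> nat set \<Rightarrow> (nat \<Rightarrow> nat) \<Rightarrow> bool" where
  "translation q x N \<psi> \<longleftrightarrow> inj_on \<psi> N \<and>
     (\<exists>L. linear_on (span (x ` N)) L \<and> (\<forall>n\<in>N. L (x n) = x (\<psi> n)) \<and>
        (\<exists>T. (\<forall>v\<in>span (x ` N). T v = L v) \<and>
             linear_on (closed_span q x N) T \<and>
             bij_betw T (closed_span q x N) (closed_span q x (\<psi> ` N)) \<and>
             (\<exists>C>0. \<forall>v\<in>closed_span q x N. q (T v) \<le> C * q v \<and> q v \<le> C * q (T v))))"

definition spreading :: "('a::real_vector \<Rightarrow> real) \<Rightarrow> (nat \<Rightarrow> 'a) \<Rightarrow> bool" where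
  "spreading q x \<longleftrightarrow> (\<forall>\<psi>. strict_mono \<psi> \<longrightarrow> translation q x UNIV \<psi>)"

end

theory Submission
  imports Defs
begin

text \<open>If the sequence were unbounded, one could choose a subsequence growing faster than
  any prescribed rate, in particular with \<open>q (x (\<psi> n)) \<ge> n q (x n) + 1\<close>. The translation
  \<open>T\<^sub>\<psi>\<close> is bounded, so \<open>q (x (\<psi> n)) \<le> C q (x n)\<close> for one constant \<open>C\<close>, which fails for \<open>n \<ge> C\<close>.\<close>

lemma quasi_norm_nonneg: "quasi_norm q \<Longrightarrow> 0 \<le> q v"
  unfolding quasi_norm_def by blast

lemma quasi_norm_zero: "quasi_norm q \<Longrightarrow> q 0 = 0"
  unfolding quasi_norm_def by blast

lemma span_subset_closed_span:
  assumes "q 0 = 0"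
  shows "span (x ` N) \<subseteq> closed_span q x N"
  unfolding closed_span_def qclosure_def using assms by auto

lemma translation_bounded_on_sequence:
  assumes "q 0 = 0" and "translation q x UNIV \<psi>"
  shows "\<exists>C. \<forall>n. q (x (\<psi> n)) \<le> C * q (x n)"
proof -
  from assms(2) obtain L T C where L: "\<forall>n. L (x n) = x (\<psi> n)"
    and T: "\<forall>v\<in>span (range x). T v = L v"
    and C: "\<forall>v\<in>closed_span q x UNIV. q (T v) \<le> C * q v"
    unfolding translation_def by blast
  have "q (x (\<psi> n)) \<le> C * q (x n)" for n
  proof -
    have "x n \<in> span (range x)" by (simp add: span_base)
    moreover from this have "x n \<in> closed_span q x UNIV"
      using span_subset_closed_span[of q, OF assms(1)] by blast
    ultimately show ?thesis using L T C by metis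
  qed
  then show ?thesis by blast
qed

lemma unbounded_dominates_along_strict_mono:
  fixes f g :: "nat \<Rightarrow> real"
  assumes "\<not> bdd_above (range f)"
  shows "\<exists>\<psi>. strict_mono \<psi> \<and> (\<forall>n. g n \<le> f (\<psi> n))"
proof -
  have beyond: "\<exists>j>N. B \<le> f j" for N B
  proof (rule ccontr)
    assume "\<not> (\<exists>j>N. B \<le> f j)"
    then have "range f \<subseteq> f ` {..N} \<union> {..B}" by (auto simp: not_less)
    moreover have "bdd_above (f ` {..N} \<union> {..B})" by simp
    ultimately show False using assms by (metis bdd_above_mono)
  qed
  have "\<exists>\<psi>. \<forall>n. g n \<le> f (\<psi> n) \<and> \<psi> n < \<psi> (Suc n)"
    by (rule dependent_nat_choice) (use beyond in auto)
  then show ?thesis using strict_monoI_Suc by blast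
qed

lemma bdd_above_if_dominated_along_strict_mono:
  fixes f :: "nat \<Rightarrow> real"
  assumes nonneg: "\<And>n. 0 \<le> f n"
    and dominated: "\<And>\<psi>. strict_mono \<psi> \<Longrightarrow> \<exists>C. \<forall>n. f (\<psi> n) \<le> C * f n"
  shows "bdd_above (range f)"
proof (rule ccontr)
  assume "\<not> bdd_above (range f)"
  then obtain \<psi> where "strict_mono \<psi>" and fast: "\<And>n. real n * f n + 1 \<le> f (\<psi> n)"
    using unbounded_dominates_along_strict_mono[of f "\<lambda>n. real n * f n + 1"] by auto
  then obtain C where C: "\<And>n. f (\<psi> n) \<le> C * f n" using dominated by blast
  obtain n :: nat where "C \<le> real n" using real_arch_simple by blast
  then have "C * f n \<le> real n * f n" using nonneg by (simp add: mult_right_mono)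
  with fast[of n] C[of n] show False by linarith
qed

theorem lemma2p4:
  fixes q :: "'a::real_vector \<Rightarrow> real" and x :: "nat \<Rightarrow> 'a"
  assumes "quasi_banach q" and "spreading q x"
  shows "\<exists>M. \<forall>n. q (x n) \<le> M"
proof -
  have q: "quasi_norm q" using assms(1) unfolding quasi_banach_def by blast
  have "bdd_above (range (\<lambda>n. q (x n)))"
  proof (rule bdd_above_if_dominated_along_strict_mono)
    show "0 \<le> q (x n)" for n using quasi_norm_nonneg[OF q] .
    show "\<exists>C. \<forall>n. q (x (\<psi> n)) \<le> C * q (x n)" if "strict_mono \<psi>" for \<psi>
      using that assms(2) translation_bounded_on_sequence[of q, OF quasi_norm_zero[OF q]]
      unfolding spreading_def by blast
  qed
  then show ?thesis by (auto simp: bdd_above_def)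
qed

end
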